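(* Let $G$ be a tree. Then for every $n\ge 1$, $\mathrm{Sz}(\Gamma^G_n)=2\,W(\Gamma^G_n)$.
   Context: Let $G=(V,E)$ be a finite tree with vertex set $V$ of size $k$, and fix an orientation of each edge, so that each edge becomes an ordered pair $e=(s,t)$. Each oriented edge $e=(s,t)$ acts on the set $V^*$ of finite words over the alphabet $V$ by the recursive rule: $e(\emptyset)=\emptyset$, $e(sw)=t\,e(w)$, $e(tw)=sw$, and $e(xw)=xw$ for $x\in V\setminus\{s,t\}$ (words are read left to right, $w\in V^*$). This action preserves word length. For $n\ge 1$, the Schreier graph $\Gamma_n^G$ is the multigraph with vertex set $V^n$ having, for each $u\in V^n$ and each oriented edge $e$ of $G$, one edge joining $u$ and $e(u)$, labelled $e$ (a loop if $e(u)=u$). For a connected graph $H$, the Wiener index is $W(H)=\sum_{\{u,v\}}d_H(u,v)$ over unordered pairs of vertices. For vertices $u,v$, $n(u,v)$ is the number of vertices of $H$ strictly closer to $u$ than to $v$. The Szeged index is $\mathrm{Sz}(H)=\sum_{\{u,v\}}n(u,v)\,n(v,u)$, the sum over all non-loop edges $\{u,v\}$ of $H$, parallel edges counted with multiplicity (loops contribute nothing). *)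

theory Defs
  imports Complex_Main
begin

definition und :: "('v \<times> 'v) set \<Rightarrow> ('v \<times> 'v) set" where
  "und E = {(x, y). (x, y) \<in> E \<or> (y, x) \<in> E}"

(* A finite tree with vertex set V, each edge oriented exactly one way:
   connected, and acyclic in the sense that every edge is a bridge
   (removing it disconnects its endpoints). *)
definition oriented_tree :: "'v set \<Rightarrow> ('v \<times> 'v) set \<Rightarrow> bool" where
  "oriented_tree V E \<longleftrightarrow>
     finite V \<and> V \<noteq> {} \<and> E \<subseteq> V \<times> V \<and>
     (\<forall>(s, t) \<in> E. s \<noteq> t \<and> (t, s) \<notin> E) \<and>
     (\<forall>x \<in> V. \<forall>y \<in> V. (x, y) \<in> (und E)\<^sup>*) \<and>
     (\<forall>(s, t) \<in> E. (s, t) \<notin> (und (E - {(s, t)}))\<^sup>*)"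

fun act :: "'v \<times> 'v \<Rightarrow> 'v list \<Rightarrow> 'v list" where
  "act e [] = []"
| "act (s, t) (x # w) =
     (if x = s then t # act (s, t) w
      else if x = t then s # w
      else x # w)"

definition words :: "'v set \<Rightarrow> nat \<Rightarrow> 'v list set" where
  "words V n = {w. length w = n \<and> set w \<subseteq> V}"

(* Adjacency relation of the Schreier graph Gamma_n (ignoring multiplicities). *)
definition sch_adj :: "'v set \<Rightarrow> ('v \<times> 'v) set \<Rightarrow> nat \<Rightarrow> ('v list \<times> 'v list) set" where
  "sch_adj V E n = {(u, v). u \<in> words V n \<and> v \<in> words V n \<and>
                      (\<exists>e \<in> E. v = act e u \<or> u = act e v)}"

definition sch_dist :: "'v set \<Rightarrow> ('v \<times> 'v) set \<Rightarrow> nat \<Rightarrow> 'v list \<Rightarrow> 'v list \<Rightarrow> nat" where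
  "sch_dist V E n u v = (LEAST k. (u, v) \<in> (sch_adj V E n) ^^ k)"

(* Wiener index: sum of distances over unordered pairs of distinct vertices,
   computed as half the sum over ordered pairs (distance is symmetric, d(u,u)=0). *)
definition wiener :: "'v set \<Rightarrow> ('v \<times> 'v) set \<Rightarrow> nat \<Rightarrow> real" where
  "wiener V E n = (\<Sum>u \<in> words V n. \<Sum>v \<in> words V n. real (sch_dist V E n u v)) / 2"

definition n_closer :: "'v set \<Rightarrow> ('v \<times> 'v) set \<Rightarrow> nat \<Rightarrow> 'v list \<Rightarrow> 'v list \<Rightarrow> nat" where
  "n_closer V E n u v = card {w \<in> words V n. sch_dist V E n w u < sch_dist V E n w v}"

(* Szeged index: sum over the non-loop edges of the multigraph Gamma_n; the edges
   are indexed by pairs (u, e) with u in V^n, e in E, joining u and e(u). *)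
definition szeged :: "'v set \<Rightarrow> ('v \<times> 'v) set \<Rightarrow> nat \<Rightarrow> real" where
  "szeged V E n = (\<Sum>(u, e) \<in> {(u, e). u \<in> words V n \<and> e \<in> E \<and> act e u \<noteq> u}.
                      real (n_closer V E n u (act e u) * n_closer V E n (act e u) u))"

end

theory Submission
  imports Defs
begin

text \<open>The non-loop edges of \<open>\<Gamma>\<^sub>n\<close> labelled by a tree edge \<open>e\<close> form disjoint cycles of
  even length \<open>2 ^ j\<close>: on the longest prefix of a word made of endpoints of \<open>e\<close>, the action
  of \<open>e\<close> is the binary odometer. Retracting the letters of a word towards \<open>e\<close> along the tree
  projects every vertex onto each such cycle, and the graph distance is the sum, over all cycles,
  of the cyclic distances of the projections. Hence for an edge \<open>uv\<close> of a cycle \<open>C\<close>, a vertex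
  is closer to \<open>u\<close> than to \<open>v\<close> iff its projection to \<open>C\<close> is, so \<open>n(u,v) n(v,u)\<close> counts the
  pairs \<open>(x, y)\<close> that the edge \<open>uv\<close> separates on \<open>C\<close>. On an even cycle, points at cyclic
  distance \<open>d\<close> are separated by exactly \<open>d\<close> of its edges, and summing over all edges of all
  cycles gives the sum of \<open>d(x, y)\<close> over all ordered pairs, that is \<open>2 W\<close>.\<close>

definition incident :: "'v \<times> 'v \<Rightarrow> 'v \<Rightarrow> bool" where
  "incident e x \<longleftrightarrow> x = fst e \<or> x = snd e"

lemma length_act [simp]: "length (act e w) = length w"
  by (induction e w rule: act.induct) auto

lemma set_act_subset: "set w \<subseteq> V \<Longrightarrow> fst e \<in> V \<Longrightarrow> snd e \<in> V \<Longrightarrow> set (act e w) \<subseteq> V"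
  by (induction e w rule: act.induct) auto

lemma act_append:
  "act (s, t) (p @ q) = act (s, t) p @ (if list_all (\<lambda>x. x = s) p then act (s, t) q else q)"
  by (induction p) auto

lemma act_replicate: "act (s, t) (replicate j s) = replicate j t"
  by (induction j) auto

lemma act_moved_hd:
  "act (s, t) q \<noteq> q \<Longrightarrow>
     q \<noteq> [] \<and> (hd q = s \<or> hd q = t) \<and> (hd (act (s, t) q) = s \<or> hd (act (s, t) q) = t)"
  by (cases q) (auto split: if_splits)

lemma act_Cons_incident_moved: "incident f x \<Longrightarrow> fst f \<noteq> snd f \<Longrightarrow> act f (x # xs) \<noteq> x # xs"
  by (cases f) (auto simp: incident_def)

lemma list_all_incident_act:
  "list_all (incident (s, t)) (act (s, t) p) = list_all (incident (s, t)) p"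
  by (induction p) (auto simp: incident_def)

text \<open>Little-endian binary numerals, the digit 1 written as \<open>fst e\<close> and 0 as \<open>snd e\<close>:
  on such words \<open>act e\<close> is the odometer, adding 1 modulo \<open>2 ^ j\<close>.\<close>

fun bin_val :: "'v \<times> 'v \<Rightarrow> 'v list \<Rightarrow> nat" where
  "bin_val e [] = 0"
| "bin_val e (a # p) = (if a = fst e then 1 else 0) + 2 * bin_val e p"

fun bin_word :: "'v \<times> 'v \<Rightarrow> nat \<Rightarrow> nat \<Rightarrow> 'v list" where
  "bin_word e 0 r = []"
| "bin_word e (Suc j) r = (if odd r then fst e else snd e) # bin_word e j (r div 2)"

lemma length_bin_word [simp]: "length (bin_word e j r) = j"
  by (induction j arbitrary: r) auto

lemma list_all_incident_bin_word: "list_all (incident e) (bin_word e j r)"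
  by (induction j arbitrary: r) (auto simp: incident_def)

lemma set_bin_word: "set (bin_word e j r) \<subseteq> {fst e, snd e}"
  by (induction j arbitrary: r) auto

lemma bin_val_less: "bin_val e p < 2 ^ length p"
  by (induction p) auto

lemma bin_val_bin_word: "fst e \<noteq> snd e \<Longrightarrow> r < 2 ^ j \<Longrightarrow> bin_val e (bin_word e j r) = r"
proof (induction j arbitrary: r)
  case (Suc j)
  then have "r div 2 < 2 ^ j" by auto
  with Suc show ?case by auto
qed simp

lemma bin_word_bin_val: "list_all (incident e) p \<Longrightarrow> bin_word e (length p) (bin_val e p) = p"
  by (induction p) (auto simp: incident_def)

lemma bin_val_inj:
  "list_all (incident e) p \<Longrightarrow> list_all (incident e) p' \<Longrightarrow> length p = length p' \<Longrightarrow>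
     bin_val e p = bin_val e p' \<Longrightarrow> p = p'"
  by (metis bin_word_bin_val)

lemma act_bin_word:
  assumes "s \<noteq> t" "r < 2 ^ j" "z = [] \<or> (hd z \<noteq> s \<and> hd z \<noteq> t)"
  shows "act (s, t) (bin_word (s, t) j r @ z) = bin_word (s, t) j (Suc r mod 2 ^ j) @ z"
  using assms(2)
proof (induction j arbitrary: r)
  case 0
  then show ?case using assms by (cases z) auto
next
  case (Suc j)
  show ?case
  proof (cases "odd r")
    case True
    have "r div 2 < 2 ^ j" using Suc.prems by auto
    moreover have "Suc r mod 2 ^ Suc j = 2 * (Suc (r div 2) mod 2 ^ j)"
    proof -
      have "Suc r = 2 * Suc (r div 2)" using True by presburger
      then show ?thesis by (simp add: mult_mod_right)
    qed
    ultimately show ?thesis using True Suc.IH assms(1) by simp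
  next
    case False
    then have "Suc r \<noteq> 2 ^ Suc j" by (metis even_Suc even_numeral even_power zero_less_Suc)
    then have "Suc r mod 2 ^ Suc j = Suc r" using Suc.prems by simp
    moreover have "Suc r div 2 = r div 2" using False by presburger
    ultimately show ?thesis using False assms(1) by simp
  qed
qed

text \<open>If \<open>q\<close> is the longest suffix of \<open>p\<close> inside \<open>g\<close> and \<open>x\<close> the letter before it,
  then \<open>retract g sd p\<close> replaces \<open>x\<close> and everything before it by \<open>sd x\<close>.\<close>

fun retract :: "('v \<Rightarrow> bool) \<Rightarrow> ('v \<Rightarrow> 'v) \<Rightarrow> 'v list \<Rightarrow> 'v list" where
  "retract g sd [] = []"
| "retract g sd (a # p) = (if list_all g p then sd a else hd (retract g sd p)) # retract g sd p"

lemma length_retract [simp]: "length (retract g sd p) = length p"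
  by (induction p) auto

lemma retract_id: "(\<And>x. g x \<Longrightarrow> sd x = x) \<Longrightarrow> list_all g p \<Longrightarrow> retract g sd p = p"
  by (induction p) auto

lemma list_all_retract: "(\<And>x. g (sd x)) \<Longrightarrow> list_all g (retract g sd p)"
proof (induction p)
  case (Cons a p)
  then show ?case by (cases p) (auto simp: list_all_iff)
qed simp

lemma retract_replicate:
  "(\<And>x. g x \<Longrightarrow> sd x = x) \<Longrightarrow> (\<And>x. g (sd x)) \<Longrightarrow>
     retract g sd (replicate j a) = replicate j (sd a)"
proof (induction j)
  case (Suc j)
  then show ?case by (cases j) (auto simp: list_all_iff)
qed simp

lemma retract_append:
  "list_all g q \<Longrightarrow> (\<And>x. g x \<Longrightarrow> sd x = x) \<Longrightarrow> retract g sd (p @ q) = retract g sd p @ q"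
proof (induction p)
  case Nil
  then show ?case by (simp add: retract_id)
next
  case (Cons a p)
  then show ?case by (cases p) auto
qed

lemma last_retract:
  assumes "p \<noteq> []" "\<And>x. g x \<Longrightarrow> sd x = x" "g (last p)"
  shows "last (retract g sd p) = last p"
  using assms
proof (induction p)
  case (Cons a p)
  show ?case
  proof (cases "p = []")
    case False
    then have "retract g sd p \<noteq> []" by (metis length_0_conv length_retract)
    then show ?thesis using Cons False by simp
  qed (use Cons in simp)
qed simp

lemma retract_eq_replicate_last:
  "p \<noteq> [] \<Longrightarrow> \<not> g (last p) \<Longrightarrow> retract g sd p = replicate (length p) (sd (last p))"
proof (induction p)
  case (Cons a p)
  then show ?case by (cases "p = []") (auto simp: list_all_iff)
qed simp

lemma retract_append_neq:
  assumes fix_g: "\<And>x. g x \<Longrightarrow> sd x = x"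
    and l: "length \<alpha> = length \<alpha>'" and ne: "\<alpha> \<noteq> []" and la: "last \<alpha> \<noteq> last \<alpha>'"
    and gd: "list_all g \<delta>"
    and nr: "\<not> g (last \<alpha>') \<Longrightarrow> \<alpha> \<noteq> replicate (length \<alpha>) (sd (last \<alpha>'))"
  shows "retract g sd (\<alpha>' @ \<delta>) \<noteq> \<alpha> @ \<delta>"
proof
  assume "retract g sd (\<alpha>' @ \<delta>) = \<alpha> @ \<delta>"
  then have eq: "retract g sd \<alpha>' = \<alpha>" using retract_append[OF gd fix_g] by simp
  have ne': "\<alpha>' \<noteq> []" using ne l by auto
  show False
  proof (cases "g (last \<alpha>')")
    case True
    then show False using last_retract[of \<alpha>' g sd, OF ne' fix_g True] eq la by simp
  next
    case False
    then show False using retract_eq_replicate_last[of \<alpha>' g sd, OF ne' False] eq nr l by simp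
  qed
qed

definition cdist :: "nat \<Rightarrow> nat \<Rightarrow> nat \<Rightarrow> nat" where
  "cdist L a b = (let d = (if a \<le> b then b - a else a - b) in min d (L - d))"

lemma cdist_commute: "cdist L a b = cdist L b a"
  by (simp add: cdist_def Let_def)

lemma cdist_self [simp]: "cdist L a a = 0"
  by (simp add: cdist_def)

lemma cdist_of_le: "a \<le> b \<Longrightarrow> cdist L a b = min (b - a) (L - (b - a))"
  by (simp add: cdist_def)

lemma cdist_of_ge: "b \<le> a \<Longrightarrow> cdist L a b = min (a - b) (L - (a - b))"
  by (simp add: cdist_def)

lemma cdist_eq_0D: "a < L \<Longrightarrow> b < L \<Longrightarrow> cdist L a b = 0 \<Longrightarrow> a = b"
  by (auto simp: cdist_def Let_def min_def split: if_splits)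

lemma cdist_Suc_mod_le: "a < L \<Longrightarrow> b < L \<Longrightarrow> cdist L a (Suc b mod L) \<le> cdist L a b + 1"
  by (cases "Suc b = L"; cases "a \<le> b") (auto simp: mod_Suc cdist_def Let_def min_def)

lemma cdist_le_Suc_mod: "a < L \<Longrightarrow> b < L \<Longrightarrow> cdist L a b \<le> cdist L a (Suc b mod L) + 1"
  by (cases "Suc b = L"; cases "a \<le> b") (auto simp: mod_Suc cdist_def Let_def min_def)

lemma cdist_int_mod:
  assumes "a < L" "b < L"
  shows "int (cdist L a b) = min ((int a - int b) mod int L) ((int b - int a) mod int L)"
proof -
  have *: "int (cdist L a b) = min ((int a - int b) mod int L) ((int b - int a) mod int L)"
    if "a \<le> b" "b < L" for a b
  proof -
    have "(int b - int a) mod int L = int b - int a" using that by simp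
    moreover have "(int a - int b) mod int L = (if a = b then 0 else int L - (int b - int a))"
      using zmod_zminus1_eq_if[of "int b - int a" "int L"] that by simp
    ultimately show ?thesis using that by (auto simp: cdist_def Let_def min_def)
  qed
  show ?thesis
  proof (cases "a \<le> b")
    case False
    then show ?thesis using *[of b a] assms by (simp add: cdist_commute min.commute)
  qed (use * assms in simp)
qed

lemma cdist_rotate:
  assumes "x < L" "y < L"
  shows "cdist L ((x + k) mod L) ((y + k) mod L) = cdist L x y"
proof -
  have L: "0 < L" using assms by simp
  have "(int ((x + k) mod L) - int ((y + k) mod L)) mod int L = (int x - int y) mod int L"
    for x y :: nat
  proof -
    have "(int ((x + k) mod L) - int ((y + k) mod L)) mod int L
        = ((int x + int k) mod int L - (int y + int k) mod int L) mod int L"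
      by (simp add: of_nat_mod)
    also have "\<dots> = ((int x + int k) - (int y + int k)) mod int L"
      by (rule mod_diff_eq)
    finally show ?thesis by simp
  qed
  then have "int (cdist L ((x + k) mod L) ((y + k) mod L)) = int (cdist L x y)"
    using assms L by (simp only: cdist_int_mod mod_less_divisor)
  then show ?thesis by simp
qed
lemma pred_mod_eq: assumes "a < (L::nat)" shows "(a + L - 1) mod L = (if a = 0 then L - 1 else a - 1)"
proof (cases "a = 0")
  case False
  then have "(a + L - 1) mod L = (a - 1) mod L"
    by (metis Nat.add_diff_assoc2 One_nat_def Suc_leI gr0I mod_add_self2)
  then show ?thesis using False assms by simp
qed (use assms in simp)

lemma cdist_0_step_closer:
  assumes "0 < x" "x < L"
  shows "cdist L (Suc x mod L) 0 + 1 = cdist L x 0 \<or> cdist L (x - 1) 0 + 1 = cdist L x 0"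
  using assms by (auto simp: cdist_def Let_def mod_Suc min_def)

lemma cdist_step_closer:
  assumes a: "a < L" and b: "b < L" and ab: "a \<noteq> b"
  shows "cdist L (Suc a mod L) b + 1 = cdist L a b \<or> cdist L ((a + L - 1) mod L) b + 1 = cdist L a b"
proof -
  define x where "x = (a + (L - b)) mod L"
  have rot: "cdist L ((y + (L - b)) mod L) 0 = cdist L y b" if "y < L" for y
    using cdist_rotate[OF that b, of "L - b"] b by simp
  have "x = (if b < a then a - b else a + (L - b))"
  proof (cases "b < a")
    case True
    then have "a + (L - b) = (a - b) + L" using b by simp
    then have "x = (a - b) mod L" unfolding x_def by simp
    then show ?thesis using True a by (simp add: less_imp_diff_less)
  qed (use a b ab in \<open>simp add: x_def\<close>)
  then have x: "0 < x" "x < L" using a b ab by auto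
  have "(Suc a mod L + (L - b)) mod L = Suc x mod L"
    by (simp add: x_def mod_Suc_eq mod_add_left_eq)
  moreover have "((a + L - 1) mod L + (L - b)) mod L = x - 1"
  proof -
    have "((a + L - 1) mod L + (L - b)) mod L = (a + L - 1 + (L - b)) mod L"
      by (rule mod_add_left_eq)
    also have "a + L - 1 + (L - b) = a + (L - b) + (L - 1)" using a by arith
    also have "(a + (L - b) + (L - 1)) mod L = (x + (L - 1)) mod L"
      unfolding x_def by (rule mod_add_left_eq[symmetric])
    also have "x + (L - 1) = x + L - 1" using a by arith
    finally show ?thesis using pred_mod_eq[OF x(2)] x(1) by simp
  qed
  ultimately show ?thesis
    using cdist_0_step_closer[OF x] rot[of a] rot[of "Suc a mod L"] rot[of "(a + L - 1) mod L"] a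
    by (simp add: x_def)
qed
lemma Suc_pred_mod: assumes "a < L" shows "Suc ((a + L - 1) mod L) mod L = a"
proof (cases "a = 0")
  case False
  then have "(a + L - 1) mod L = a - 1" using pred_mod_eq[OF assms] by simp
  then show ?thesis using False assms by simp
qed (use assms in simp)

definition separates :: "nat \<Rightarrow> nat \<Rightarrow> nat \<Rightarrow> nat \<Rightarrow> bool" where
  "separates L a b r \<longleftrightarrow> cdist L a r < cdist L a (Suc r mod L) \<and> cdist L b (Suc r mod L) < cdist L b r"

lemma separates_rotate:
  assumes "a < L" "b < L" "r < L"
  shows "separates L ((a + k) mod L) ((b + k) mod L) ((r + k) mod L) = separates L a b r"
proof -
  have "Suc ((r + k) mod L) mod L = (Suc r mod L + k) mod L"
    by (metis add_Suc mod_Suc_eq mod_add_left_eq)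
  moreover have "Suc r mod L < L" using assms by simp
  ultimately show ?thesis using assms by (simp add: separates_def cdist_rotate)
qed

lemma cdist_0_less_Suc_mod_iff:
  assumes L: "L = 2 * p" and r: "r < L"
  shows "cdist L 0 r < cdist L 0 (Suc r mod L) \<longleftrightarrow> r < p"
proof (cases "r < p")
  case True
  have "Suc r mod L = Suc r" using True L by simp
  moreover have "cdist L 0 r = r" using True L by (simp add: cdist_of_le min_def)
  moreover have "cdist L 0 (Suc r) = Suc r" using True L by (simp add: cdist_of_le min_def)
  ultimately show ?thesis using True by simp
next
  case False
  show ?thesis
  proof (cases "Suc r = L")
    case True
    then show ?thesis using False by (simp add: cdist_def)
  next
    case False2: False
    have "Suc r mod L = Suc r" using False2 r by simp
    moreover have "cdist L 0 r = L - r"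
    proof -
      have "cdist L 0 r = min r (L - r)" by (simp add: cdist_of_le)
      also have "\<dots> = L - r" by (rule min_absorb2) (use False L in linarith)
      finally show ?thesis .
    qed
    moreover have "cdist L 0 (Suc r) = L - Suc r" using False L r False2 by (simp add: cdist_of_le min_def)
    ultimately show ?thesis using False by simp
  qed
qed

lemma cdist_Suc_less_iff:
  assumes L: "L = 2 * p" and r: "r < p" and b: "b < L"
  shows "cdist L b (Suc r mod L) < cdist L b r \<longleftrightarrow> r < b \<and> b \<le> r + p"
proof -
  have s: "Suc r mod L = Suc r" using r L by simp
  show ?thesis
  proof (cases "b \<le> r")
    case True
    have "cdist L b r = r - b" using True r L by (simp add: cdist_of_le min_def)
    moreover have "cdist L b (Suc r) = Suc r - b" using True r L by (simp add: cdist_of_le min_def)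
    ultimately show ?thesis using True s by simp
  next
    case False
    show ?thesis
    proof (cases "b \<le> r + p")
      case True
      have "cdist L b r = b - r" using True False r L by (simp add: cdist_of_ge min_def)
      moreover have "cdist L b (Suc r) = b - Suc r" using True False r L by (simp add: cdist_of_ge min_def)
      ultimately show ?thesis using True False s by simp
    next
      case False2: False
      have "cdist L b r = L - (b - r)" using False2 False r L b by (simp add: cdist_of_ge min_def)
      moreover have "cdist L b (Suc r) = L - (b - Suc r)"
      proof -
        have "cdist L b (Suc r) = min (b - Suc r) (L - (b - Suc r))" using False2 r by (simp add: cdist_of_ge)
        also have "\<dots> = L - (b - Suc r)" by (rule min_absorb2) (use False2 L b in linarith)
        finally show ?thesis .
      qed
      ultimately show ?thesis using False2 False s b by simp
    qed
  qed
qed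

lemma separates_0_iff:
  assumes L: "L = 2 * p" and b: "b < L" and r: "r < L"
  shows "separates L 0 b r \<longleftrightarrow> r < p \<and> r < b \<and> b \<le> r + p"
  using cdist_0_less_Suc_mod_iff[OF L r] cdist_Suc_less_iff[OF L _ b] unfolding separates_def by blast

lemma card_separates_0:
  assumes L: "L = 2 * p" and b: "b < L"
  shows "card {r. r < L \<and> separates L 0 b r} = cdist L 0 b"
proof -
  have "{r. r < L \<and> separates L 0 b r} = (if b \<le> p then {0..<b} else {b - p..<p})"
    using separates_0_iff[OF L b] L by auto
  moreover have "cdist L 0 b = (if b \<le> p then b else L - b)"
    using L b by (auto simp: cdist_of_le min_def)
  ultimately show ?thesis using L by (simp add: mult_2)
qed

text \<open>This is the only place where the evenness of the cycles matters.\<close>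

lemma card_separates:
  assumes L: "L = 2 * p" and a: "a < L" and b: "b < L"
  shows "card {r. r < L \<and> separates L a b r} = cdist L a b"
proof -
  define rot where "rot r = (r + a) mod L" for r
  define b' where "b' = (b + (L - a)) mod L"
  have b': "b' < L" using a by (simp add: b'_def)
  have rot_b': "rot b' = b" using a b by (simp add: rot_def b'_def mod_add_left_eq)
  have rot_0: "rot 0 = a" using a by (simp add: rot_def)
  have sep: "separates L a b (rot r) \<longleftrightarrow> separates L 0 b' r" if "r < L" for r
    using separates_rotate[of 0 L b' r a] that a b' rot_0 rot_b' by (simp add: rot_def)
  have "{r. r < L \<and> separates L a b r} = rot ` {r. r < L \<and> separates L 0 b' r}"
  proof (rule set_eqI, rule iffI)
    fix r assume r: "r \<in> {r. r < L \<and> separates L a b r}"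
    define r' where "r' = (r + (L - a)) mod L"
    have r': "r' < L" using a by (simp add: r'_def)
    have "rot r' = r" using a r by (simp add: rot_def r'_def mod_add_left_eq)
    then show "r \<in> rot ` {r. r < L \<and> separates L 0 b' r}" using r r' sep[OF r'] by force
  qed (use sep a in \<open>auto simp: rot_def\<close>)
  moreover have "inj_on rot {r. r < L \<and> separates L 0 b' r}"
  proof (rule inj_onI)
    fix x y assume "x \<in> {r. r < L \<and> separates L 0 b' r}" "y \<in> {r. r < L \<and> separates L 0 b' r}"
      and "rot x = rot y"
    then show "x = y" using cdist_rotate[of x L y a] cdist_eq_0D[of x L y] by (simp add: rot_def)
  qed
  ultimately have "card {r. r < L \<and> separates L a b r} = cdist L 0 b'"
    using card_separates_0[OF L b'] by (simp add: card_image)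
  also have "\<dots> = cdist L a b"
    using cdist_rotate[of 0 L b' a] a b' rot_0 rot_b' by (simp add: rot_def)
  finally show ?thesis .
qed

lemma sym_und: "sym (und X)"
  by (auto simp: und_def intro: symI)

lemma und_rtrancl_sym: "(x, y) \<in> (und X)\<^sup>* \<Longrightarrow> (y, x) \<in> (und X)\<^sup>*"
  by (metis sym_und sym_rtrancl symD)

locale tree_action =
  fixes V :: "'v set" and E :: "('v \<times> 'v) set"
  assumes tree: "oriented_tree V E"
begin

lemma finite_V: "finite V"
  using tree by (simp add: oriented_tree_def)

lemma edges_subset: "E \<subseteq> V \<times> V"
  using tree by (simp add: oriented_tree_def)

lemma finite_E: "finite E"
  using finite_subset[OF edges_subset] finite_V by blast

lemma edge_ends_neq: assumes "e \<in> E" shows "fst e \<noteq> snd e"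
proof -
  have "\<forall>(s, t) \<in> E. s \<noteq> t \<and> (t, s) \<notin> E" using tree by (simp add: oriented_tree_def)
  then show ?thesis using assms by fastforce
qed

lemma edge_ends_in_V: "e \<in> E \<Longrightarrow> fst e \<in> V \<and> snd e \<in> V"
  using edges_subset by auto

lemma edge_is_bridge: assumes "e \<in> E" shows "(fst e, snd e) \<notin> (und (E - {e}))\<^sup>*"
proof -
  have "\<forall>(s, t) \<in> E. (s, t) \<notin> (und (E - {(s, t)}))\<^sup>*" using tree by (simp add: oriented_tree_def)
  then show ?thesis using assms by fastforce
qed

lemma connected: "x \<in> V \<Longrightarrow> y \<in> V \<Longrightarrow> (x, y) \<in> (und E)\<^sup>*"
  using tree by (simp add: oriented_tree_def)

lemma finite_words: "finite (words V n)"
proof -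
  have "words V n \<subseteq> {xs. set xs \<subseteq> V \<and> length xs \<le> n}" by (auto simp: words_def)
  then show ?thesis using finite_V finite_lists_length_le finite_subset by blast
qed

lemma length_words: "w \<in> words V n \<Longrightarrow> length w = n"
  by (simp add: words_def)

lemma act_in_words: "u \<in> words V n \<Longrightarrow> e \<in> E \<Longrightarrow> act e u \<in> words V n"
  using set_act_subset[of u V e] edge_ends_in_V by (simp add: words_def)

definition side :: "'v \<times> 'v \<Rightarrow> 'v \<Rightarrow> 'v" where
  "side e y = (if (y, fst e) \<in> (und (E - {e}))\<^sup>* then fst e else snd e)"

lemma side_incident: "incident e (side e y)"
  by (simp add: side_def incident_def)

lemma side_eq_self: assumes "e \<in> E" "incident e x" shows "side e x = x"
proof (cases "x = fst e")
  case False
  then have x: "x = snd e" using assms(2) by (simp add: incident_def)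
  have "(snd e, fst e) \<notin> (und (E - {e}))\<^sup>*"
    using edge_is_bridge[OF assms(1)] und_rtrancl_sym[of "snd e" "fst e"] by blast
  then show ?thesis using x False by (simp add: side_def)
qed (simp add: side_def)

lemma side_other_edge:
  assumes "g \<in> E" "e \<in> E" "g \<noteq> e"
  shows "side e (fst g) = side e (snd g)"
proof -
  have "(fst g, snd g) \<in> und (E - {e})" using assms by (cases g) (auto simp: und_def)
  then have fwd: "(fst g, snd g) \<in> (und (E - {e}))\<^sup>*" by (rule r_into_rtrancl)
  then have bwd: "(snd g, fst g) \<in> (und (E - {e}))\<^sup>*" by (rule und_rtrancl_sym)
  have "(fst g, fst e) \<in> (und (E - {e}))\<^sup>* \<longleftrightarrow> (snd g, fst e) \<in> (und (E - {e}))\<^sup>*"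
    using rtrancl_trans[OF fwd] rtrancl_trans[OF bwd] by blast
  then show ?thesis by (simp add: side_def)
qed

lemma first_edge_on_path:
  assumes "(a, b) \<in> (und E)\<^sup>*" "b \<noteq> a"
  shows "\<exists>f c. f \<in> E \<and> (f = (a, c) \<or> f = (c, a)) \<and> (c, b) \<in> (und (E - {f}))\<^sup>*"
  using assms
proof (induction rule: rtrancl_induct)
  case (step y b)
  show ?case
  proof (cases "y = a")
    case True
    then have "(a, b) \<in> E \<or> (b, a) \<in> E" using step by (auto simp: und_def)
    then show ?thesis by blast
  next
    case False
    then obtain f c where f: "f \<in> E" "f = (a, c) \<or> f = (c, a)" "(c, y) \<in> (und (E - {f}))\<^sup>*"
      using step.IH by blast
    have "(y, b) \<in> E \<or> (b, y) \<in> E" using step by (auto simp: und_def)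
    moreover have "(y, b) \<noteq> f" "(b, y) \<noteq> f" using f(2) False step.prems by auto
    ultimately have "(y, b) \<in> und (E - {f})" by (auto simp: und_def)
    then have "(c, b) \<in> (und (E - {f}))\<^sup>*" using f(3) by (rule rtrancl_into_rtrancl[rotated])
    then show ?thesis using f(1,2) by blast
  qed
qed simp

lemma first_edge_toward:
  assumes "a \<in> V" "b \<in> V" "a \<noteq> b"
  shows "\<exists>f c. f \<in> E \<and> (f = (a, c) \<or> f = (c, a)) \<and> side f b = c"
proof -
  obtain f c where f: "f \<in> E" "f = (a, c) \<or> f = (c, a)" "(c, b) \<in> (und (E - {f}))\<^sup>*"
    using first_edge_on_path[OF connected[OF assms(1,2)]] assms(3) by blast
  have "side f b = c"
  proof (cases "f = (a, c)")
    case True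
    have "(b, a) \<notin> (und (E - {f}))\<^sup>*"
    proof
      assume "(b, a) \<in> (und (E - {f}))\<^sup>*"
      with f(3) have "(c, a) \<in> (und (E - {f}))\<^sup>*" by (rule rtrancl_trans)
      then have "(a, c) \<in> (und (E - {f}))\<^sup>*" by (rule und_rtrancl_sym)
      then show False using edge_is_bridge[OF f(1)] True by simp
    qed
    then show ?thesis using True by (simp add: side_def)
  next
    case False
    then have "f = (c, a)" using f(2) by blast
    moreover have "(b, c) \<in> (und (E - {f}))\<^sup>*" using f(3) by (rule und_rtrancl_sym)
    ultimately show ?thesis by (simp add: side_def)
  qed
  then show ?thesis using f(1,2) by blast
qed

lemma side_edge_end:
  assumes "g \<in> E" "e \<in> E" "g \<noteq> e" "x = fst g \<or> x = snd g" "incident e x"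
  shows "side e (fst g) = x" "side e (snd g) = x"
  using side_other_edge[OF assms(1-3)] side_eq_self[OF assms(2,5)] assms(4) by auto

lemma hd_retract_act_Cons:
  assumes e: "e \<in> E" and g: "(s', t') \<in> E"
    and ne: "\<not> ((s', t') = e \<and> list_all (incident e) p)"
    and IH: "retract (incident e) (side e) (act (s', t') p) = retract (incident e) (side e) p"
  shows "hd (retract (incident e) (side e) (t' # act (s', t') p)) =
         hd (retract (incident e) (side e) (s' # p))"
proof -
  let ?r = "retract (incident e) (side e)"
  have fix_e: "\<And>x. incident e x \<Longrightarrow> side e x = x" using side_eq_self[OF e] by blast
  consider (both) "list_all (incident e) p" "list_all (incident e) (act (s', t') p)"
    | (neither) "\<not> list_all (incident e) p" "\<not> list_all (incident e) (act (s', t') p)"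
    | (before) "list_all (incident e) p" "\<not> list_all (incident e) (act (s', t') p)"
    | (after) "\<not> list_all (incident e) p" "list_all (incident e) (act (s', t') p)"
    by blast
  then show ?thesis
  proof cases
    case both
    then have "(s', t') \<noteq> e" using ne by auto
    then show ?thesis using both side_other_edge[OF g e] by simp
  next
    case neither
    then show ?thesis using IH by simp
  next
    case before
    then have gne: "(s', t') \<noteq> e" using ne by auto
    have "act (s', t') p \<noteq> p" using before by auto
    then have p: "p \<noteq> []" "hd p = s' \<or> hd p = t'" using act_moved_hd[of s' t' p] by auto
    have "incident e (hd p)" using before p(1) by (cases p) auto
    then have "side e s' = hd p" using side_edge_end(1)[OF g e gne] p(2) by auto
    moreover have "hd (?r p) = hd p" using retract_id[OF fix_e before(1)] by simp
    ultimately show ?thesis using before IH by simp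
  next
    case after
    then have gne: "(s', t') \<noteq> e" using ne list_all_incident_act[of s' t' p] by auto
    have "act (s', t') p \<noteq> p" using after by auto
    then have "p \<noteq> []" and p: "hd (act (s', t') p) = s' \<or> hd (act (s', t') p) = t'"
      using act_moved_hd[of s' t' p] by auto
    then have "act (s', t') p \<noteq> []" by (metis length_0_conv length_act)
    then have "incident e (hd (act (s', t') p))" using after by (cases "act (s', t') p") auto
    then have "side e t' = hd (act (s', t') p)" using side_edge_end(2)[OF g e gne] p by auto
    moreover have "hd (?r p) = hd (act (s', t') p)" using IH retract_id[OF fix_e after(2)] by simp
    ultimately show ?thesis using after by simp
  qed
qed

lemma retract_act:
  assumes e: "e \<in> E" and g: "(s', t') \<in> E"
    and exc: "\<not> ((s', t') = e \<and> list_all (incident e) p)"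
  shows "retract (incident e) (side e) (act (s', t') p) = retract (incident e) (side e) p"
  using exc
proof (induction p)
  case (Cons a p)
  consider (s) "a = s'" | (t) "a = t'" "a \<noteq> s'" | (other) "a \<noteq> s'" "a \<noteq> t'" by blast
  then show ?case
  proof cases
    case s
    have ne: "\<not> ((s', t') = e \<and> list_all (incident e) p)"
      using Cons.prems s by (auto simp: incident_def list_all_iff)
    have IH: "retract (incident e) (side e) (act (s', t') p) = retract (incident e) (side e) p"
      using Cons.IH[OF ne] .
    show ?thesis
      using hd_retract_act_Cons[OF e g ne IH] IH s by simp
  next
    case t
    have "side e s' = side e t'" if "list_all (incident e) p"
    proof -
      have "(s', t') \<noteq> e" using Cons.prems t that by (auto simp: incident_def list_all_iff)
      then show ?thesis using side_other_edge[OF g e] by simp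
    qed
    then show ?thesis using t by auto
  qed simp
qed simp

text \<open>The non-loop edges of \<open>\<Gamma>\<^sub>n\<close> labelled \<open>e\<close> form disjoint cycles, one for each word
  \<open>z\<close> that is empty or starts off \<open>e\<close>: the words \<open>p @ z\<close> with \<open>p\<close> a word of length
  \<open>j = n - length z \<ge> 1\<close> over the endpoints of \<open>e\<close>, read as numbers modulo \<open>2 ^ j\<close>.
  For \<open>j = 1\<close> this "cycle" is a pair of parallel edges.\<close>

definition cycles :: "nat \<Rightarrow> (('v \<times> 'v) \<times> 'v list) set" where
  "cycles n = {(e, z). e \<in> E \<and> length z < n \<and> set z \<subseteq> V \<and> (z = [] \<or> \<not> incident e (hd z))}"

definition cyc_exp :: "nat \<Rightarrow> ('v \<times> 'v) \<times> 'v list \<Rightarrow> nat" where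
  "cyc_exp n c = n - length (snd c)"

definition cyc_vertex :: "nat \<Rightarrow> ('v \<times> 'v) \<times> 'v list \<Rightarrow> nat \<Rightarrow> 'v list" where
  "cyc_vertex n c r = bin_word (fst c) (cyc_exp n c) r @ snd c"

definition cycle_at :: "'v \<times> 'v \<Rightarrow> 'v list \<Rightarrow> ('v \<times> 'v) \<times> 'v list" where
  "cycle_at e w = (e, dropWhile (incident e) w)"

definition proj_word :: "nat \<Rightarrow> ('v \<times> 'v) \<times> 'v list \<Rightarrow> 'v list \<Rightarrow> 'v list" where
  "proj_word n c w =
     (if drop (cyc_exp n c) w = snd c
      then retract (incident (fst c)) (side (fst c)) (take (cyc_exp n c) w)
      else replicate (cyc_exp n c) (side (fst c) (hd (snd c))))"

definition proj :: "nat \<Rightarrow> ('v \<times> 'v) \<times> 'v list \<Rightarrow> 'v list \<Rightarrow> nat" where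
  "proj n c w = bin_val (fst c) (proj_word n c w)"

lemma finite_cycles: "finite (cycles n)"
proof -
  have "cycles n \<subseteq> E \<times> {z. set z \<subseteq> V \<and> length z \<le> n}" by (auto simp: cycles_def)
  moreover have "finite (E \<times> {z. set z \<subseteq> V \<and> length z \<le> n})"
    using finite_E finite_V finite_lists_length_le by blast
  ultimately show ?thesis by (rule finite_subset)
qed

lemma cyclesD:
  assumes "c \<in> cycles n"
  shows "fst c \<in> E" "length (snd c) < n" "set (snd c) \<subseteq> V"
    "snd c = [] \<or> \<not> incident (fst c) (hd (snd c))"
  using assms by (auto simp: cycles_def)

lemma cyc_exp_pos: "c \<in> cycles n \<Longrightarrow> 0 < cyc_exp n c"
  using cyclesD(2) by (simp add: cyc_exp_def)

lemma length_proj_word: "length w = n \<Longrightarrow> length (proj_word n c w) = cyc_exp n c"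
  by (simp add: proj_word_def cyc_exp_def)

lemma list_all_incident_proj_word: "list_all (incident (fst c)) (proj_word n c w)"
  using list_all_retract[of "incident (fst c)" "side (fst c)"] side_incident
  by (simp add: proj_word_def list_all_iff)

lemma proj_less: "length w = n \<Longrightarrow> proj n c w < 2 ^ cyc_exp n c"
  using bin_val_less length_proj_word by (metis proj_def)

lemma proj_word_act_prefix:
  assumes c: "(e, z) \<in> cycles n" and g: "(s', t') \<in> E"
    and lp: "length p = n - length z" and act_pq: "act (s', t') (p @ q) = act (s', t') p @ q"
    and exc: "\<not> ((s', t') = e \<and> q = z \<and> list_all (incident e) p)"
  shows "proj_word n (e, z) (act (s', t') (p @ q)) = proj_word n (e, z) (p @ q)"
proof (cases "q = z")
  case True
  have e: "e \<in> E" using cyclesD(1)[OF c] by simp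
  have "\<not> ((s', t') = e \<and> list_all (incident e) p)" using exc True by simp
  then show ?thesis
    using retract_act[OF e g] act_pq lp by (simp add: proj_word_def cyc_exp_def)
qed (use act_pq lp in \<open>simp add: proj_word_def cyc_exp_def\<close>)

lemma proj_word_act_carry:
  assumes c: "(e, z) \<in> cycles n" and g: "(s', t') \<in> E"
    and lp: "length p = n - length z" and ps: "list_all (\<lambda>x. x = s') p"
    and moved: "act (s', t') q \<noteq> q"
  shows "proj_word n (e, z) (act (s', t') (p @ q)) = proj_word n (e, z) (p @ q)"
proof -
  define j where "j = length p"
  have pj: "p = replicate j s'" using ps by (auto simp: j_def list_all_iff intro: replicate_eqI)
  have j: "j = n - length z" using lp by (simp add: j_def)
  have e: "e \<in> E" and zh: "z = [] \<or> \<not> incident e (hd z)" using cyclesD[OF c] by simp_all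
  have fix_e: "\<And>x. incident e x \<Longrightarrow> side e x = x" using side_eq_self[OF e] by blast
  have retract_rep: "retract (incident e) (side e) (replicate j x) = replicate j (side e x)" for x
    using retract_replicate[of "incident e" "side e", OF fix_e side_incident] .
  have "act (s', t') (p @ q) = replicate j t' @ act (s', t') q"
    using act_append[of s' t' p q] act_replicate[of s' t' j] ps pj by simp
  then have proj_act: "proj_word n (e, z) (act (s', t') (p @ q)) =
      (if act (s', t') q = z then replicate j (side e t') else replicate j (side e (hd z)))"
    using retract_rep j by (simp add: proj_word_def cyc_exp_def)
  have proj: "proj_word n (e, z) (p @ q) =
      (if q = z then replicate j (side e s') else replicate j (side e (hd z)))"
    using retract_rep j pj by (simp add: proj_word_def cyc_exp_def)
  have q: "q \<noteq> []" "hd q = s' \<or> hd q = t'" "hd (act (s', t') q) = s' \<or> hd (act (s', t') q) = t'"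
    using act_moved_hd[OF moved] by auto
  show ?thesis
  proof (cases "q = z \<or> act (s', t') q = z")
    case True
    then have "z \<noteq> []" using q by (metis length_0_conv length_act)
    then have "\<not> incident e (hd z)" using zh by simp
    then have gne: "(s', t') \<noteq> e" using q True by (auto simp: incident_def)
    have "side e (hd z) = side e s'" "side e (hd z) = side e t'"
      using q True side_other_edge[OF g e gne] by auto
    then show ?thesis using proj_act proj moved True by auto
  qed (use proj_act proj in auto)
qed

text \<open>Moving along an edge changes the projection to no other cycle than the one that
  the edge traverses.\<close>

lemma proj_word_act:
  assumes c: "(e, z) \<in> cycles n" and u: "u \<in> words V n" and g: "g \<in> E"
    and exc: "\<not> (g = e \<and> drop (n - length z) u = z \<and> list_all (incident e) (take (n - length z) u))"
  shows "proj_word n (e, z) (act g u) = proj_word n (e, z) u"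
proof -
  obtain s' t' where gst: "g = (s', t')" by (cases g)
  define p where "p = take (n - length z) u"
  define q where "q = drop (n - length z) u"
  have u_pq: "u = p @ q" by (simp add: p_def q_def)
  have lp: "length p = n - length z" using length_words[OF u] cyclesD(2)[OF c] by (simp add: p_def)
  have exc': "\<not> ((s', t') = e \<and> q = z \<and> list_all (incident e) p)"
    using exc gst by (simp add: p_def q_def)
  have "proj_word n (e, z) (act (s', t') (p @ q)) = proj_word n (e, z) (p @ q)"
  proof (cases "list_all (\<lambda>x. x = s') p \<and> act (s', t') q \<noteq> q")
    case True
    then show ?thesis by (intro proj_word_act_carry[OF c g[unfolded gst] lp]) simp_all
  next
    case False
    then have "act (s', t') (p @ q) = act (s', t') p @ q"
      using act_append[of s' t' p q] by (cases "list_all (\<lambda>x. x = s') p") simp_all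
    then show ?thesis by (rule proj_word_act_prefix[OF c g[unfolded gst] lp _ exc'])
  qed
  then show ?thesis by (simp only: gst u_pq)
qed

lemma takeWhile_append_stop: "list_all P p \<Longrightarrow> z = [] \<or> \<not> P (hd z) \<Longrightarrow> takeWhile P (p @ z) = p"
  by (cases z) (auto simp: takeWhile_append list_all_iff)

lemma cyc_vertex_in_words: assumes c: "c \<in> cycles n" shows "cyc_vertex n c r \<in> words V n"
proof -
  have "set (bin_word (fst c) (cyc_exp n c) r) \<subseteq> {fst (fst c), snd (fst c)}"
    by (rule set_bin_word)
  then have "set (bin_word (fst c) (cyc_exp n c) r) \<subseteq> V"
    using edge_ends_in_V[OF cyclesD(1)[OF c]] by auto
  then show ?thesis using cyclesD(2,3)[OF c] by (simp add: words_def cyc_vertex_def cyc_exp_def)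
qed

lemma proj_word_cyc_vertex:
  assumes "c \<in> cycles n"
  shows "proj_word n c (cyc_vertex n c r) = bin_word (fst c) (cyc_exp n c) r"
proof -
  have "retract (incident (fst c)) (side (fst c)) (bin_word (fst c) (cyc_exp n c) r) =
      bin_word (fst c) (cyc_exp n c) r"
    by (rule retract_id)
      (use side_eq_self[OF cyclesD(1)[OF assms]] list_all_incident_bin_word[of "fst c"] in auto)
  then show ?thesis by (simp add: proj_word_def cyc_vertex_def)
qed

lemma proj_cyc_vertex:
  assumes "c \<in> cycles n" "r < 2 ^ cyc_exp n c"
  shows "proj n c (cyc_vertex n c r) = r"
  using proj_word_cyc_vertex[OF assms(1)] bin_val_bin_word[OF edge_ends_neq[OF cyclesD(1)[OF assms(1)]] assms(2)]
  by (simp add: proj_def)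

lemma takeWhile_cyc_vertex:
  assumes "c \<in> cycles n"
  shows "takeWhile (incident (fst c)) (cyc_vertex n c r) = bin_word (fst c) (cyc_exp n c) r"
  unfolding cyc_vertex_def
  by (rule takeWhile_append_stop) (use list_all_incident_bin_word[of "fst c"] cyclesD(4)[OF assms] in auto)

lemma act_cyc_vertex:
  assumes "c \<in> cycles n" "r < 2 ^ cyc_exp n c"
  shows "act (fst c) (cyc_vertex n c r) = cyc_vertex n c (Suc r mod 2 ^ cyc_exp n c)"
proof -
  obtain s t z where c: "c = ((s, t), z)" by (metis prod.collapse)
  have "s \<noteq> t" using edge_ends_neq cyclesD(1)[OF assms(1)] c by fastforce
  moreover have "z = [] \<or> (hd z \<noteq> s \<and> hd z \<noteq> t)"
    using cyclesD(4)[OF assms(1)] c by (auto simp: incident_def)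
  ultimately show ?thesis using act_bin_word assms(2) c by (simp add: cyc_vertex_def)
qed

lemma act_cyc_vertex_neq:
  assumes c: "c \<in> cycles n" and r: "r < 2 ^ cyc_exp n c"
  shows "act (fst c) (cyc_vertex n c r) \<noteq> cyc_vertex n c r"
proof
  define L :: nat where "L = 2 ^ cyc_exp n c"
  assume fixed: "act (fst c) (cyc_vertex n c r) = cyc_vertex n c r"
  have "Suc r mod L = proj n c (act (fst c) (cyc_vertex n c r))"
    unfolding act_cyc_vertex[OF c r] L_def by (rule proj_cyc_vertex[OF c, symmetric]) simp
  also have "\<dots> = r" unfolding fixed by (rule proj_cyc_vertex[OF c r])
  finally have "Suc r mod L = r" .
  moreover have "2 ^ 1 \<le> L"
    unfolding L_def using cyc_exp_pos[OF c] by (intro power_increasing) auto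
  ultimately show False using r[folded L_def] by (cases "Suc r = L") auto
qed

lemma proj_word_act_cyc_vertex_other:
  assumes c: "c \<in> cycles n" and c': "c' \<in> cycles n" and ne: "c' \<noteq> c"
  shows "proj_word n c' (act (fst c) (cyc_vertex n c r)) = proj_word n c' (cyc_vertex n c r)"
proof -
  obtain e z where ez: "c = (e, z)" by (cases c)
  obtain e' z' where ez': "c' = (e', z')" by (cases c')
  define u where "u = cyc_vertex n c r"
  have u: "u \<in> words V n" using cyc_vertex_in_words[OF c] by (simp add: u_def)
  have "\<not> (e = e' \<and> drop (n - length z') u = z' \<and> list_all (incident e') (take (n - length z') u))"
  proof
    assume h: "e = e' \<and> drop (n - length z') u = z' \<and> list_all (incident e') (take (n - length z') u)"
    then have "u = take (n - length z') u @ z'" by (metis append_take_drop_id)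
    then have "takeWhile (incident e) u = take (n - length z') u"
      using takeWhile_append_stop[of "incident e" "take (n - length z') u" z'] h cyclesD(4)[OF c'] ez'
      by auto
    moreover have "takeWhile (incident e) u = bin_word e (cyc_exp n c) r"
      using takeWhile_cyc_vertex[OF c] ez by (simp add: u_def)
    ultimately have "take (n - length z') u = bin_word e (cyc_exp n c) r" by simp
    moreover have "length (take (n - length z') u) = n - length z'" using length_words[OF u] by simp
    ultimately have "n - length z' = cyc_exp n c" by simp
    then have "z' = drop (cyc_exp n c) u" using h by simp
    also have "\<dots> = z" by (simp add: u_def cyc_vertex_def ez)
    finally show False using ne ez ez' h by simp
  qed
  then show ?thesis using proj_word_act[of e' z' n u e] c' ez' u cyclesD(1)[OF c] ez by (simp add: u_def)
qed

lemma proj_act_cyc_vertex_other: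
  "c \<in> cycles n \<Longrightarrow> c' \<in> cycles n \<Longrightarrow> c' \<noteq> c \<Longrightarrow>
     proj n c' (act (fst c) (cyc_vertex n c r)) = proj n c' (cyc_vertex n c r)"
  using proj_word_act_cyc_vertex_other by (simp add: proj_def)

lemma cyc_vertex_cycle_at:
  assumes u: "u \<in> words V n" and e: "e \<in> E" and moved: "act e u \<noteq> u"
  shows "cycle_at e u \<in> cycles n"
    and "bin_val e (takeWhile (incident e) u) < 2 ^ cyc_exp n (cycle_at e u)"
    and "cyc_vertex n (cycle_at e u) (bin_val e (takeWhile (incident e) u)) = u"
proof -
  define tw where "tw = takeWhile (incident e) u"
  define dw where "dw = dropWhile (incident e) u"
  have tdw: "tw @ dw = u" by (simp add: tw_def dw_def)
  have "u \<noteq> [] \<and> incident e (hd u)"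
    using act_moved_hd[of "fst e" "snd e" u] moved by (auto simp: incident_def)
  then have "tw \<noteq> []" by (cases u) (auto simp: tw_def)
  moreover have "length tw + length dw = n" using tdw length_words[OF u] by (metis length_append)
  ultimately have ldw: "length dw < n" and exp: "cyc_exp n (e, dw) = length tw"
    by (auto simp: cyc_exp_def)
  have "list_all (incident e) tw" by (auto simp: tw_def list_all_iff dest: set_takeWhileD)
  then have "cyc_vertex n (e, dw) (bin_val e tw) = u"
    using bin_word_bin_val[of e tw] exp tdw by (simp add: cyc_vertex_def)
  moreover have "dw = [] \<or> \<not> incident e (hd dw)" using hd_dropWhile by (metis dw_def)
  moreover have "set dw \<subseteq> V" using u set_dropWhileD by (fastforce simp: dw_def words_def)
  ultimately show "cycle_at e u \<in> cycles n"
    and "cyc_vertex n (cycle_at e u) (bin_val e (takeWhile (incident e) u)) = u"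
    using e ldw by (simp_all add: cycles_def cycle_at_def tw_def dw_def)
  show "bin_val e (takeWhile (incident e) u) < 2 ^ cyc_exp n (cycle_at e u)"
    using exp bin_val_less[of e tw] by (simp add: cycle_at_def tw_def dw_def)
qed

lemma cyc_vertex_inj:
  assumes c: "c \<in> cycles n" and c': "c' \<in> cycles n" and e: "fst c = fst c'"
    and r: "r < 2 ^ cyc_exp n c" and r': "r' < 2 ^ cyc_exp n c'"
    and eq: "cyc_vertex n c r = cyc_vertex n c' r'"
  shows "c = c'" "r = r'"
proof -
  have "bin_word (fst c) (cyc_exp n c) r = takeWhile (incident (fst c)) (cyc_vertex n c r)"
    by (rule takeWhile_cyc_vertex[OF c, symmetric])
  also have "\<dots> = bin_word (fst c') (cyc_exp n c') r'"
    using takeWhile_cyc_vertex[OF c'] eq e by simp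
  finally have "cyc_exp n c = cyc_exp n c'" by (metis length_bin_word)
  then have "snd c = snd c'" using eq by (simp add: cyc_vertex_def)
  then show cc: "c = c'" using e by (simp add: prod_eq_iff)
  have "r = proj n c (cyc_vertex n c r)" by (rule proj_cyc_vertex[OF c r, symmetric])
  also have "\<dots> = proj n c (cyc_vertex n c' r')" by (simp only: eq)
  also have "\<dots> = proj n c' (cyc_vertex n c' r')" by (simp only: cc)
  also have "\<dots> = r'" by (rule proj_cyc_vertex[OF c' r'])
  finally show "r = r'" .
qed

definition proj_dist :: "nat \<Rightarrow> 'v list \<Rightarrow> 'v list \<Rightarrow> nat" where
  "proj_dist n w w' = (\<Sum>c\<in>cycles n. cdist (2 ^ cyc_exp n c) (proj n c w) (proj n c w'))"

lemma proj_dist_commute: "proj_dist n w w' = proj_dist n w' w"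
  by (simp add: proj_dist_def cdist_commute)

lemma proj_dist_self [simp]: "proj_dist n w w = 0"
  by (simp add: proj_dist_def)

text \<open>Moving along cycle \<open>c\<close> changes only the summand of \<open>c\<close> in \<open>proj_dist\<close>.\<close>

lemma proj_dist_act_cyc_vertex:
  assumes c: "c \<in> cycles n" and r: "r < 2 ^ cyc_exp n c"
  defines "L \<equiv> 2 ^ cyc_exp n c"
  shows "proj_dist n w (act (fst c) (cyc_vertex n c r)) + cdist L (proj n c w) r =
         proj_dist n w (cyc_vertex n c r) + cdist L (proj n c w) (Suc r mod L)"
proof -
  define y where "y = cyc_vertex n c r"
  define rest where "rest y = (\<Sum>c'\<in>cycles n - {c}. cdist (2 ^ cyc_exp n c') (proj n c' w) (proj n c' y))" for y
  have summands: "proj_dist n w y = cdist L (proj n c w) (proj n c y) + rest y" for y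
    unfolding proj_dist_def rest_def L_def using sum.remove[OF finite_cycles c] by blast
  have "rest (act (fst c) y) = rest y"
    unfolding rest_def by (rule sum.cong) (use proj_act_cyc_vertex_other[OF c] in \<open>auto simp: y_def\<close>)
  moreover have "proj n c (act (fst c) y) = Suc r mod L"
    using act_cyc_vertex[OF c r] proj_cyc_vertex[OF c] by (simp add: y_def L_def)
  moreover have "proj n c y = r" using proj_cyc_vertex[OF c r] by (simp add: y_def)
  ultimately show ?thesis using summands[of y] summands[of "act (fst c) y"] by (simp add: y_def)
qed

lemma eq_length_neq_split_last:
  "length xs = length ys \<Longrightarrow> xs \<noteq> ys \<Longrightarrow>
   \<exists>\<alpha> \<alpha>' \<beta>. xs = \<alpha> @ \<beta> \<and> ys = \<alpha>' @ \<beta> \<and> length \<alpha> = length \<alpha>' \<and> \<alpha> \<noteq> [] \<and> last \<alpha> \<noteq> last \<alpha>'"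
proof (induction xs arbitrary: ys rule: rev_induct)
  case (snoc x xs)
  obtain ys1 y where ys: "ys = ys1 @ [y]" using snoc.prems(1) by (cases ys rule: rev_exhaust) auto
  have l: "length xs = length ys1" using snoc.prems(1) ys by simp
  show ?case
  proof (cases "x = y")
    case False
    then show ?thesis using ys l by (intro exI[of _ "xs @ [x]"] exI[of _ "ys1 @ [y]"] exI[of _ "[]"]) auto
  next
    case True
    then obtain \<alpha> \<alpha>' \<beta> where "xs = \<alpha> @ \<beta>" "ys1 = \<alpha>' @ \<beta>" "length \<alpha> = length \<alpha>'" "\<alpha> \<noteq> []" "last \<alpha> \<noteq> last \<alpha>'"
      using snoc.IH[OF l] snoc.prems(2) ys by auto
    then show ?thesis using ys True by (intro exI[of _ \<alpha>] exI[of _ \<alpha>'] exI[of _ "\<beta> @ [x]"]) auto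
  qed
qed simp

lemma takeWhile_length_ge:
  "(\<And>i. i < k \<Longrightarrow> P (xs ! i)) \<Longrightarrow> k \<le> length xs \<Longrightarrow> k \<le> length (takeWhile P xs)"
proof (induction xs arbitrary: k)
  case (Cons x xs)
  show ?case
  proof (cases k)
    case (Suc k')
    have "P x" using Cons.prems(1)[of 0] Suc by simp
    moreover have "k' \<le> length (takeWhile P xs)"
      using Cons.IH[of k'] Cons.prems Suc by fastforce
    ultimately show ?thesis using Suc by simp
  qed simp
qed simp

lemma takeWhile_length_le: "k < length xs \<Longrightarrow> \<not> P (xs ! k) \<Longrightarrow> length (takeWhile P xs) \<le> k"
proof (induction xs arbitrary: k)
  case (Cons x xs)
  show ?case
  proof (cases k)
    case (Suc k')
    then show ?thesis using Cons.IH[of k'] Cons.prems by auto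
  qed (use Cons.prems in simp)
qed simp

lemma drop_append_neq:
  assumes "length \<alpha> = length \<alpha>'" "last \<alpha> \<noteq> last \<alpha>'" "m < length \<alpha>"
  shows "drop m (\<alpha> @ \<beta>) \<noteq> drop m (\<alpha>' @ \<beta>)"
proof
  assume "drop m (\<alpha> @ \<beta>) = drop m (\<alpha>' @ \<beta>)"
  then have "drop m \<alpha> = drop m \<alpha>'" using assms by simp
  then show False using assms last_drop by metis
qed

lemma proj_word_cycle_at:
  fixes f :: "'v \<times> 'v" and w w' :: "'v list"
  assumes "length w = n"
  defines "J \<equiv> length (takeWhile (incident f) w)"
  shows "proj_word n (cycle_at f w) w' =
    (if drop J w' = drop J w then retract (incident f) (side f) (take J w')
     else replicate J (side f (hd (drop J w))))"
proof -
  have drop: "dropWhile (incident f) w = drop J w"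
    by (metis J_def append_eq_conv_conj takeWhile_dropWhile_id)
  moreover have "cyc_exp n (cycle_at f w) = J"
    using assms length_takeWhile_le[of "incident f" w]
    by (simp add: cyc_exp_def cycle_at_def J_def drop)
  ultimately show ?thesis by (simp add: proj_word_def cycle_at_def)
qed

text \<open>Two distinct words \<open>w = \<alpha> @ \<beta>\<close> and \<open>w' = \<alpha>' @ \<beta>\<close>, where \<open>\<alpha>\<close> and \<open>\<alpha>'\<close> differ in
  their last letter, are separated by a cycle through \<open>w\<close>, labelled by an edge at the first
  letter of \<open>w\<close> that points toward a suitable letter of \<open>\<alpha>\<close> or \<open>\<alpha>'\<close>.\<close>

context
  fixes n w w' \<alpha> \<alpha>' \<beta>
  assumes w: "w \<in> words V n" and w': "w' \<in> words V n"
    and w_split: "w = \<alpha> @ \<beta>" and w'_split: "w' = \<alpha>' @ \<beta>"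
    and same_length: "length \<alpha> = length \<alpha>'" and \<alpha>_ne: "\<alpha> \<noteq> []" and last_neq: "last \<alpha> \<noteq> last \<alpha>'"
begin

lemma nth_w: "i < length \<alpha> \<Longrightarrow> w ! i = \<alpha> ! i"
  using w_split by (simp add: nth_append)

lemma act_w_neq:
  assumes "f \<in> E" "incident f (hd \<alpha>)"
  shows "act f w \<noteq> w"
proof -
  have "w = hd \<alpha> # (tl \<alpha> @ \<beta>)" using w_split \<alpha>_ne by simp
  then show ?thesis using act_Cons_incident_moved[OF assms(2) edge_ends_neq[OF assms(1)]] by metis
qed

lemma proj_word_cycle_at_neq_of_long:
  assumes f: "f \<in> E" and long: "length \<alpha> \<le> length (takeWhile (incident f) w)"
    and nr: "\<not> incident f (last \<alpha>') \<Longrightarrow> \<alpha> \<noteq> replicate (length \<alpha>) (side f (last \<alpha>'))"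
  shows "proj_word n (cycle_at f w) w' \<noteq> takeWhile (incident f) w"
proof -
  define J where "J = length (takeWhile (incident f) w)"
  define \<delta> where "\<delta> = take (J - length \<alpha>) \<beta>"
  have drop_eq: "drop J w' = drop J w" and take': "take J w' = \<alpha>' @ \<delta>" and take: "take J w = \<alpha> @ \<delta>"
    using long w_split w'_split same_length by (simp_all add: J_def \<delta>_def)
  have tw: "takeWhile (incident f) w = \<alpha> @ \<delta>" using take by (metis J_def takeWhile_eq_take)
  then have "list_all (incident f) \<delta>"
    by (metis list_all_append list_all_iff set_takeWhileD)
  then have "retract (incident f) (side f) (\<alpha>' @ \<delta>) \<noteq> \<alpha> @ \<delta>"
    using retract_append_neq[of "incident f" "side f"] side_eq_self[OF f] same_length \<alpha>_ne last_neq nr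
    by blast
  then show ?thesis
    using proj_word_cycle_at[OF length_words[OF w], of f w'] drop_eq take' tw by (simp add: J_def)
qed

lemma separating_edge_if_constant:
  assumes const: "\<forall>x\<in>set \<alpha>. x = hd \<alpha>"
  shows "\<exists>f\<in>E. act f w \<noteq> w \<and> proj_word n (cycle_at f w) w' \<noteq> takeWhile (incident f) w"
proof -
  have "last \<alpha> = hd \<alpha>" using const \<alpha>_ne by simp
  moreover have "hd \<alpha> \<in> V" using w w_split \<alpha>_ne by (auto simp: words_def)
  moreover have "\<alpha>' \<noteq> []" using same_length \<alpha>_ne by auto
  then have "last \<alpha>' \<in> V" using last_in_set[of \<alpha>'] w' w'_split by (auto simp: words_def)
  ultimately obtain f c where f: "f \<in> E" "f = (hd \<alpha>, c) \<or> f = (c, hd \<alpha>)" "side f (last \<alpha>') = c"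
    using first_edge_toward[of "hd \<alpha>" "last \<alpha>'"] last_neq by auto
  have "c \<noteq> hd \<alpha>" using edge_ends_neq[OF f(1)] f(2) by auto
  have inc: "incident f (hd \<alpha>)" using f(2) by (auto simp: incident_def)
  have "length \<alpha> \<le> length (takeWhile (incident f) w)"
  proof (rule takeWhile_length_ge)
    fix i assume i: "i < length \<alpha>"
    then have "\<alpha> ! i = hd \<alpha>" using const nth_mem by blast
    then show "incident f (w ! i)" using inc nth_w[OF i] by simp
  qed (simp add: w_split)
  moreover have "\<alpha> \<noteq> replicate (length \<alpha>) (side f (last \<alpha>'))"
    using f(3) \<open>c \<noteq> hd \<alpha>\<close> \<alpha>_ne by (metis hd_replicate length_0_conv)
  ultimately show ?thesis
    using proj_word_cycle_at_neq_of_long[OF f(1)] act_w_neq[OF f(1) inc] f(1) by blast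
qed

context
  fixes m f
  assumes m: "m < length \<alpha>" and prefix: "\<forall>i<m. \<alpha> ! i = hd \<alpha>" and at_m: "\<alpha> ! m \<noteq> hd \<alpha>"
    and f: "f \<in> E" and inc: "incident f (hd \<alpha>)"
begin

lemma m_pos: "0 < m"
  using at_m \<alpha>_ne by (cases \<alpha>) (auto intro: gr0I)

lemma m_le_takeWhile: "m \<le> length (takeWhile (incident f) w)"
  by (rule takeWhile_length_ge) (use prefix inc nth_w m w_split in auto)

lemma nth_takeWhile_w: "i < length (takeWhile (incident f) w) \<Longrightarrow> takeWhile (incident f) w ! i = w ! i"
  by (metis nth_take takeWhile_eq_take)

lemma proj_word_neq_if_off_edge:
  assumes off: "\<not> incident f (\<alpha> ! m)" and side_m: "side f (\<alpha> ! m) \<noteq> hd \<alpha>"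
  shows "proj_word n (cycle_at f w) w' \<noteq> takeWhile (incident f) w"
proof -
  have "length (takeWhile (incident f) w) \<le> m"
    by (rule takeWhile_length_le) (use off nth_w m w_split in auto)
  then have J: "length (takeWhile (incident f) w) = m" using m_le_takeWhile by simp
  have "drop m w' \<noteq> drop m w" using drop_append_neq[OF same_length last_neq m] w_split w'_split by metis
  moreover have "hd (drop m w) = \<alpha> ! m" using m nth_w w_split by (simp add: hd_drop_conv_nth)
  ultimately have "proj_word n (cycle_at f w) w' = replicate m (side f (\<alpha> ! m))"
    using proj_word_cycle_at[OF length_words[OF w], of f w'] J by simp
  moreover have "takeWhile (incident f) w ! 0 = hd \<alpha>"
    using nth_takeWhile_w[of 0] J m_pos nth_w[of 0] \<alpha>_ne by (simp add: hd_conv_nth)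
  ultimately show ?thesis using m_pos side_m by (metis nth_replicate)
qed

lemma proj_word_neq_if_on_edge:
  assumes on: "incident f (\<alpha> ! m)"
  shows "proj_word n (cycle_at f w) w' \<noteq> takeWhile (incident f) w"
proof -
  define J where "J = length (takeWhile (incident f) w)"
  have "Suc m \<le> J" unfolding J_def
    by (rule takeWhile_length_ge) (use prefix inc on nth_w m w_split in \<open>auto simp: less_Suc_eq\<close>)
  then have "0 < J" "m < J" by auto
  have tw0: "takeWhile (incident f) w ! 0 = hd \<alpha>"
    using nth_takeWhile_w[of 0] \<open>0 < J\<close> nth_w[of 0] \<alpha>_ne by (simp add: J_def hd_conv_nth)
  have twm: "takeWhile (incident f) w ! m = \<alpha> ! m"
    using nth_takeWhile_w[of m] \<open>m < J\<close> nth_w[OF m] by (simp add: J_def)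
  show ?thesis
  proof (cases "drop J w' = drop J w")
    case False
    then have proj_J: "proj_word n (cycle_at f w) w' = replicate J (side f (hd (drop J w)))"
      using proj_word_cycle_at[OF length_words[OF w], of f w'] by (simp add: J_def)
    show ?thesis
    proof
      assume "proj_word n (cycle_at f w) w' = takeWhile (incident f) w"
      then have "takeWhile (incident f) w = replicate J (side f (hd (drop J w)))"
        using proj_J by simp
      then show False using tw0 twm at_m \<open>0 < J\<close> \<open>m < J\<close> by simp
    qed
  next
    case True
    then have "length \<alpha> \<le> J"
      using drop_append_neq[OF same_length last_neq] w_split w'_split by (metis not_le)
    moreover have "\<alpha> \<noteq> replicate (length \<alpha>) x" for x
      using at_m m \<alpha>_ne by (metis hd_replicate length_0_conv nth_replicate)
    ultimately show ?thesis using proj_word_cycle_at_neq_of_long[OF f] by (simp add: J_def)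
  qed
qed

end

lemma separating_edge_if_nonconstant:
  assumes m: "m < length \<alpha>" and prefix: "\<forall>i<m. \<alpha> ! i = hd \<alpha>" and at_m: "\<alpha> ! m \<noteq> hd \<alpha>"
  shows "\<exists>f\<in>E. act f w \<noteq> w \<and> proj_word n (cycle_at f w) w' \<noteq> takeWhile (incident f) w"
proof -
  have "hd \<alpha> \<in> V" "\<alpha> ! m \<in> V" using w w_split \<alpha>_ne m by (auto simp: words_def)
  then obtain f c where f: "f \<in> E" "f = (hd \<alpha>, c) \<or> f = (c, hd \<alpha>)" "side f (\<alpha> ! m) = c"
    using first_edge_toward[of "hd \<alpha>" "\<alpha> ! m"] at_m by auto
  have "c \<noteq> hd \<alpha>" using edge_ends_neq[OF f(1)] f(2) by auto
  have inc: "incident f (hd \<alpha>)" using f(2) by (auto simp: incident_def)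
  have "proj_word n (cycle_at f w) w' \<noteq> takeWhile (incident f) w"
  proof (cases "incident f (\<alpha> ! m)")
    case True
    then show ?thesis by (rule proj_word_neq_if_on_edge[OF m prefix at_m f(1) inc])
  next
    case False
    then show ?thesis
      using proj_word_neq_if_off_edge[OF m prefix at_m f(1) inc] f(3) \<open>c \<noteq> hd \<alpha>\<close> by blast
  qed
  then show ?thesis using act_w_neq[OF f(1) inc] f(1) by blast
qed

end

lemma separating_edge:
  assumes w: "w \<in> words V n" and w': "w' \<in> words V n" and ne: "w \<noteq> w'"
  shows "\<exists>f\<in>E. act f w \<noteq> w \<and> proj_word n (cycle_at f w) w' \<noteq> takeWhile (incident f) w"
proof -
  obtain \<alpha> \<alpha>' \<beta> where parts: "w = \<alpha> @ \<beta>" "w' = \<alpha>' @ \<beta>" "length \<alpha> = length \<alpha>'" "\<alpha> \<noteq> []"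
      "last \<alpha> \<noteq> last \<alpha>'"
    using eq_length_neq_split_last[of w w'] length_words[OF w] length_words[OF w'] ne by auto
  note hyps = w w' parts
  show ?thesis
  proof (cases "\<forall>x\<in>set \<alpha>. x = hd \<alpha>")
    case True
    then show ?thesis by (rule separating_edge_if_constant[OF hyps])
  next
    case False
    define pre where "pre = takeWhile (\<lambda>x. x = hd \<alpha>) \<alpha>"
    define m where "m = length pre"
    have "pre \<noteq> \<alpha>" using False by (simp add: pre_def takeWhile_eq_all_conv)
    moreover have "pre = take m \<alpha>" by (simp add: pre_def m_def takeWhile_eq_take[symmetric])
    ultimately have "m < length \<alpha>"
      using length_takeWhile_le[of "\<lambda>x. x = hd \<alpha>" \<alpha>] by (fastforce simp: pre_def m_def)
    moreover have "\<forall>i<m. \<alpha> ! i = hd \<alpha>"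
    proof (intro allI impI)
      fix i assume "i < m"
      then have "pre ! i \<in> set pre" by (simp add: m_def)
      then have "pre ! i = hd \<alpha>" by (auto simp: pre_def dest: set_takeWhileD)
      then show "\<alpha> ! i = hd \<alpha>" using \<open>i < m\<close> by (simp add: pre_def m_def takeWhile_nth)
    qed
    moreover have "\<alpha> ! m \<noteq> hd \<alpha>"
      using nth_length_takeWhile[of "\<lambda>x. x = hd \<alpha>" \<alpha>] calculation(1) by (simp add: m_def pre_def)
    ultimately show ?thesis by (rule separating_edge_if_nonconstant[OF hyps])
  qed
qed

lemma separating_cycle:
  assumes w: "w \<in> words V n" and w': "w' \<in> words V n" and ne: "w \<noteq> w'"
  obtains c r where "c \<in> cycles n" "r < 2 ^ cyc_exp n c" "w = cyc_vertex n c r" "proj n c w' \<noteq> r"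
proof -
  obtain f where f: "f \<in> E" "act f w \<noteq> w"
    and neq: "proj_word n (cycle_at f w) w' \<noteq> takeWhile (incident f) w"
    using separating_edge[OF assms] by blast
  define c where "c = cycle_at f w"
  define r where "r = bin_val f (takeWhile (incident f) w)"
  have c: "c \<in> cycles n" and r: "r < 2 ^ cyc_exp n c" and w_eq: "cyc_vertex n c r = w"
    unfolding c_def r_def by (rule cyc_vertex_cycle_at[OF w f])+
  have "fst c = f" by (simp add: c_def cycle_at_def)
  then have "takeWhile (incident f) w = bin_word f (cyc_exp n c) r"
    using takeWhile_cyc_vertex[OF c, of r] w_eq by simp
  then have "length (takeWhile (incident f) w) = cyc_exp n c" by simp
  then have len: "length (proj_word n c w') = length (takeWhile (incident f) w)"
    using length_proj_word[OF length_words[OF w']] by simp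
  have "proj n c w' \<noteq> r"
  proof
    assume "proj n c w' = r"
    then have "bin_val f (proj_word n c w') = bin_val f (takeWhile (incident f) w)"
      by (simp add: proj_def r_def \<open>fst c = f\<close>)
    moreover have "list_all (incident f) (proj_word n c w')"
      using list_all_incident_proj_word[of c n w'] \<open>fst c = f\<close> by simp
    moreover have "list_all (incident f) (takeWhile (incident f) w)"
      by (auto simp: list_all_iff dest: set_takeWhileD)
    ultimately have "proj_word n c w' = takeWhile (incident f) w" using bin_val_inj len by blast
    then show False using neq by (simp add: c_def)
  qed
  then show ?thesis using that c r w_eq[symmetric] by blast
qed

lemma proj_dist_act_le:
  assumes w: "w \<in> words V n" and y: "y \<in> words V n" and e: "e \<in> E"
  shows "proj_dist n w (act e y) \<le> proj_dist n w y + 1" "proj_dist n w y \<le> proj_dist n w (act e y) + 1"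
proof -
  have "proj_dist n w (act e y) \<le> proj_dist n w y + 1 \<and> proj_dist n w y \<le> proj_dist n w (act e y) + 1"
  proof (cases "act e y = y")
    case False
    define c where "c = cycle_at e y"
    define r where "r = bin_val e (takeWhile (incident e) y)"
    have c: "c \<in> cycles n" and r: "r < 2 ^ cyc_exp n c" and y_eq: "cyc_vertex n c r = y"
      unfolding c_def r_def by (rule cyc_vertex_cycle_at[OF y e False])+
    have "fst c = e" by (simp add: c_def cycle_at_def)
    have p: "proj n c w < 2 ^ cyc_exp n c" using proj_less length_words[OF w] by blast
    show ?thesis
      using proj_dist_act_cyc_vertex[OF c r, of w] cdist_Suc_mod_le[OF p r] cdist_le_Suc_mod[OF p r]
        y_eq \<open>fst c = e\<close> by simp
  qed simp
  then show "proj_dist n w (act e y) \<le> proj_dist n w y + 1" "proj_dist n w y \<le> proj_dist n w (act e y) + 1"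
    by simp_all
qed

lemma proj_dist_le_relpow:
  "(w, w') \<in> (sch_adj V E n) ^^ k \<Longrightarrow> w \<in> words V n \<Longrightarrow> proj_dist n w w' \<le> k"
proof (induction k arbitrary: w')
  case (Suc k)
  from Suc.prems(1) obtain y where y: "(w, y) \<in> (sch_adj V E n) ^^ k" and "(y, w') \<in> sch_adj V E n"
    by (rule relpow_Suc_E)
  then obtain e where e: "e \<in> E" and y': "y \<in> words V n" "w' \<in> words V n"
    and step: "w' = act e y \<or> y = act e w'"
    by (auto simp: sch_adj_def)
  then have "proj_dist n w w' \<le> proj_dist n w y + 1"
    using proj_dist_act_le(1)[OF Suc.prems(2) y'(1) e] proj_dist_act_le(2)[OF Suc.prems(2) y'(2) e]
    by auto
  then show ?case using Suc.IH[OF y Suc.prems(2)] by simp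
qed simp

lemma proj_dist_pos:
  assumes w: "w \<in> words V n" and w': "w' \<in> words V n" and ne: "w \<noteq> w'"
  shows "0 < proj_dist n w w'"
proof -
  obtain c r where c: "c \<in> cycles n" and r: "r < 2 ^ cyc_exp n c" and w_eq: "w = cyc_vertex n c r"
    and neq: "proj n c w' \<noteq> r"
    using separating_cycle[OF assms] .
  have "proj n c w' < 2 ^ cyc_exp n c" using proj_less length_words[OF w'] by blast
  then have "0 < cdist (2 ^ cyc_exp n c) (proj n c w) (proj n c w')"
    using cdist_eq_0D[OF r] neq proj_cyc_vertex[OF c r] w_eq by (metis gr0I)
  also have "\<dots> \<le> proj_dist n w w'"
    unfolding proj_dist_def by (rule member_le_sum) (use c finite_cycles in auto)
  finally show ?thesis .
qed

lemma cyc_vertex_Suc_adj: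
  assumes c: "c \<in> cycles n" and q: "q < 2 ^ cyc_exp n c"
  shows "(cyc_vertex n c q, cyc_vertex n c (Suc q mod 2 ^ cyc_exp n c)) \<in> sch_adj V E n"
    and "(cyc_vertex n c (Suc q mod 2 ^ cyc_exp n c), cyc_vertex n c q) \<in> sch_adj V E n"
proof -
  have "cyc_vertex n c (Suc q mod 2 ^ cyc_exp n c) = act (fst c) (cyc_vertex n c q)"
    using act_cyc_vertex[OF c q] by simp
  then show "(cyc_vertex n c q, cyc_vertex n c (Suc q mod 2 ^ cyc_exp n c)) \<in> sch_adj V E n"
    and "(cyc_vertex n c (Suc q mod 2 ^ cyc_exp n c), cyc_vertex n c q) \<in> sch_adj V E n"
    using cyc_vertex_in_words[OF c] cyclesD(1)[OF c] unfolding sch_adj_def by blast+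
qed

text \<open>From \<open>w \<noteq> w'\<close> one can always step along a separating cycle through \<open>w\<close>
  towards the position of \<open>w'\<close> on it, which lowers \<open>proj_dist\<close> by one.\<close>

lemma proj_dist_descent:
  assumes w: "w \<in> words V n" and w': "w' \<in> words V n" and ne: "w \<noteq> w'"
  obtains w'' where "(w, w'') \<in> sch_adj V E n" "w'' \<in> words V n" "proj_dist n w'' w' + 1 = proj_dist n w w'"
proof -
  obtain c r where c: "c \<in> cycles n" and r: "r < 2 ^ cyc_exp n c" and w_eq: "w = cyc_vertex n c r"
    and neq: "proj n c w' \<noteq> r"
    using separating_cycle[OF assms] .
  define L where "L = (2::nat) ^ cyc_exp n c"
  define b where "b = proj n c w'"
  have b: "b < L" using proj_less length_words[OF w'] by (simp add: b_def L_def)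
  have rL: "r < L" using r by (simp add: L_def)
  have step: "proj_dist n (cyc_vertex n c (Suc q mod L)) w' + cdist L q b =
      proj_dist n (cyc_vertex n c q) w' + cdist L (Suc q mod L) b" if "q < L" for q
    using proj_dist_act_cyc_vertex[OF c, of q w'] act_cyc_vertex[OF c, of q] that
      proj_dist_commute[of n w'] cdist_commute[of L b] by (simp add: L_def b_def)
  consider (forward) "cdist L (Suc r mod L) b + 1 = cdist L r b"
    | (backward) "cdist L ((r + L - 1) mod L) b + 1 = cdist L r b"
    using cdist_step_closer[OF rL b] neq b_def by auto
  then show ?thesis
  proof cases
    case forward
    then show ?thesis
      using that[of "cyc_vertex n c (Suc r mod L)"] cyc_vertex_Suc_adj(1)[OF c r]
        cyc_vertex_in_words[OF c] step[OF rL] w_eq by (simp add: L_def)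
  next
    case backward
    define q where "q = (r + L - 1) mod L"
    have q: "q < L" and Suc_q: "Suc q mod L = r" using Suc_pred_mod[OF rL] rL by (simp_all add: q_def)
    show ?thesis
      using that[of "cyc_vertex n c q"] cyc_vertex_Suc_adj(2)[OF c q[unfolded L_def]]
        cyc_vertex_in_words[OF c] step[OF q] backward Suc_q w_eq by (simp add: L_def q_def)
  qed
qed

lemma relpow_proj_dist:
  "w \<in> words V n \<Longrightarrow> w' \<in> words V n \<Longrightarrow> (w, w') \<in> (sch_adj V E n) ^^ proj_dist n w w'"
proof (induction "proj_dist n w w'" arbitrary: w)
  case 0
  then have "w = w'" using proj_dist_pos by fastforce
  then show ?case by simp
next
  case (Suc k)
  then have "w \<noteq> w'" by auto
  then obtain w'' where adj: "(w, w'') \<in> sch_adj V E n" and w'': "w'' \<in> words V n"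
    and dec: "proj_dist n w'' w' + 1 = proj_dist n w w'"
    using proj_dist_descent[OF Suc.prems] by blast
  have "(w'', w') \<in> (sch_adj V E n) ^^ proj_dist n w'' w'"
    using Suc.hyps(1)[OF _ w'' Suc.prems(2)] dec Suc.hyps(2) by simp
  then have "(w, w') \<in> (sch_adj V E n) ^^ Suc (proj_dist n w'' w')" by (rule relpow_Suc_I2[OF adj])
  then show ?case using dec by (metis Suc_eq_plus1)
qed

theorem dist_eq_proj_dist:
  assumes "w \<in> words V n" "w' \<in> words V n"
  shows "sch_dist V E n w w' = proj_dist n w w'"
  unfolding sch_dist_def
  by (rule Least_equality) (use relpow_proj_dist[OF assms] proj_dist_le_relpow assms(1) in auto)

lemma bij_betw_cycle_steps_edges:
  "bij_betw (\<lambda>(c, r). (cyc_vertex n c r, fst c)) (SIGMA c:cycles n. {..<2 ^ cyc_exp n c})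
     {(u, e). u \<in> words V n \<and> e \<in> E \<and> act e u \<noteq> u}"
proof (rule bij_betw_imageI)
  show "inj_on (\<lambda>(c, r). (cyc_vertex n c r, fst c)) (SIGMA c:cycles n. {..<2 ^ cyc_exp n c})"
    by (rule inj_onI) (use cyc_vertex_inj in auto)
  show "(\<lambda>(c, r). (cyc_vertex n c r, fst c)) ` (SIGMA c:cycles n. {..<2 ^ cyc_exp n c}) =
      {(u, e). u \<in> words V n \<and> e \<in> E \<and> act e u \<noteq> u}"
  proof (rule set_eqI, rule iffI)
    fix z assume "z \<in> {(u, e). u \<in> words V n \<and> e \<in> E \<and> act e u \<noteq> u}"
    then obtain u e where z: "z = (u, e)" and u: "u \<in> words V n" and e: "e \<in> E" and moved: "act e u \<noteq> u"
      by blast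
    show "z \<in> (\<lambda>(c, r). (cyc_vertex n c r, fst c)) ` (SIGMA c:cycles n. {..<2 ^ cyc_exp n c})"
      using cyc_vertex_cycle_at[OF u e moved] z
      by (intro image_eqI[of _ _ "(cycle_at e u, bin_val e (takeWhile (incident e) u))"])
        (auto simp: cycle_at_def)
  qed (use cyc_vertex_in_words cyclesD(1) act_cyc_vertex_neq in auto)
qed

lemma szeged_eq_cycle_sum:
  "szeged V E n = (\<Sum>c\<in>cycles n. \<Sum>r<2 ^ cyc_exp n c.
      real (n_closer V E n (cyc_vertex n c r) (act (fst c) (cyc_vertex n c r)) *
            n_closer V E n (act (fst c) (cyc_vertex n c r)) (cyc_vertex n c r)))"
proof -
  define g where "g = (\<lambda>(u, e). real (n_closer V E n u (act e u) * n_closer V E n (act e u) u))"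
  have "szeged V E n = sum g {(u, e). u \<in> words V n \<and> e \<in> E \<and> act e u \<noteq> u}"
    by (simp add: szeged_def g_def)
  also have "\<dots> = (\<Sum>x\<in>(SIGMA c:cycles n. {..<2 ^ cyc_exp n c}). g ((\<lambda>(c, r). (cyc_vertex n c r, fst c)) x))"
    by (rule sum.reindex_bij_betw[OF bij_betw_cycle_steps_edges, symmetric])
  also have "\<dots> = (\<Sum>(c, r)\<in>(SIGMA c:cycles n. {..<2 ^ cyc_exp n c}). g (cyc_vertex n c r, fst c))"
    by (simp only: prod.case_distrib)
  also have "\<dots> = (\<Sum>c\<in>cycles n. \<Sum>r<2 ^ cyc_exp n c. g (cyc_vertex n c r, fst c))"
    by (rule sum.Sigma[OF finite_cycles, symmetric]) simp
  finally show ?thesis by (simp add: g_def)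
qed

text \<open>Since \<open>d = proj_dist\<close> and a step along cycle \<open>c\<close> changes only the summand of
  \<open>c\<close>, the vertices closer to one end of an edge of \<open>c\<close> are read off their positions on \<open>c\<close>.\<close>

lemma closer_cyc_vertex_iff:
  assumes c: "c \<in> cycles n" and r: "r < 2 ^ cyc_exp n c" and x: "x \<in> words V n"
  defines "L \<equiv> 2 ^ cyc_exp n c" and "u \<equiv> cyc_vertex n c r"
  shows "sch_dist V E n x u < sch_dist V E n x (act (fst c) u) \<longleftrightarrow>
           cdist L (proj n c x) r < cdist L (proj n c x) (Suc r mod L)"
    and "sch_dist V E n x (act (fst c) u) < sch_dist V E n x u \<longleftrightarrow>
           cdist L (proj n c x) (Suc r mod L) < cdist L (proj n c x) r"
proof -
  have u: "u \<in> words V n" and v: "act (fst c) u \<in> words V n"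
    using cyc_vertex_in_words[OF c] act_in_words cyclesD(1)[OF c] by (simp_all add: u_def)
  have step: "proj_dist n x (act (fst c) u) + cdist L (proj n c x) r =
      proj_dist n x u + cdist L (proj n c x) (Suc r mod L)"
    using proj_dist_act_cyc_vertex[OF c r] by (simp add: L_def u_def)
  show "sch_dist V E n x u < sch_dist V E n x (act (fst c) u) \<longleftrightarrow>
           cdist L (proj n c x) r < cdist L (proj n c x) (Suc r mod L)"
    and "sch_dist V E n x (act (fst c) u) < sch_dist V E n x u \<longleftrightarrow>
           cdist L (proj n c x) (Suc r mod L) < cdist L (proj n c x) r"
    unfolding dist_eq_proj_dist[OF x u] dist_eq_proj_dist[OF x v] using step by auto
qed

lemma n_closer_product:
  assumes c: "c \<in> cycles n" and r: "r < 2 ^ cyc_exp n c"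
  defines "L \<equiv> 2 ^ cyc_exp n c" and "u \<equiv> cyc_vertex n c r"
  shows "n_closer V E n u (act (fst c) u) * n_closer V E n (act (fst c) u) u =
    (\<Sum>x\<in>words V n. \<Sum>y\<in>words V n. of_bool (separates L (proj n c x) (proj n c y) r))"
proof -
  have card_eq: "card {x \<in> words V n. P x} = (\<Sum>x\<in>words V n. of_bool (P x))" for P
    by (simp add: of_bool_def sum.inter_filter[OF finite_words, symmetric])
  have "{x \<in> words V n. sch_dist V E n x u < sch_dist V E n x (act (fst c) u)} =
      {x \<in> words V n. cdist L (proj n c x) r < cdist L (proj n c x) (Suc r mod L)}"
    using closer_cyc_vertex_iff(1)[OF c r] by (auto simp: L_def u_def)
  moreover have "{y \<in> words V n. sch_dist V E n y (act (fst c) u) < sch_dist V E n y u} =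
      {y \<in> words V n. cdist L (proj n c y) (Suc r mod L) < cdist L (proj n c y) r}"
    using closer_cyc_vertex_iff(2)[OF c r] by (auto simp: L_def u_def)
  ultimately show ?thesis
    by (simp add: n_closer_def card_eq sum_product separates_def of_bool_conj)
qed

lemma sum_card_separates:
  assumes c: "c \<in> cycles n" and x: "x \<in> words V n" and y: "y \<in> words V n"
  shows "(\<Sum>r<2 ^ cyc_exp n c. of_bool (separates (2 ^ cyc_exp n c) (proj n c x) (proj n c y) r))
     = cdist (2 ^ cyc_exp n c) (proj n c x) (proj n c y)"
proof -
  obtain j where j: "cyc_exp n c = Suc j" using cyc_exp_pos[OF c] by (metis Suc_pred)
  have "(\<Sum>r<2 ^ cyc_exp n c. of_bool (separates (2 ^ cyc_exp n c) (proj n c x) (proj n c y) r))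
      = card {r. r < 2 ^ cyc_exp n c \<and> separates (2 ^ cyc_exp n c) (proj n c x) (proj n c y) r}"
    by (simp add: sum.If_cases Int_def lessThan_def conj_commute)
  also have "\<dots> = cdist (2 ^ cyc_exp n c) (proj n c x) (proj n c y)"
    using card_separates[of "2 ^ cyc_exp n c" "2 ^ j"] proj_less[OF length_words[OF x], of c]
      proj_less[OF length_words[OF y], of c] j by simp
  finally show ?thesis .
qed

theorem szeged_eq_twice_wiener: "szeged V E n = 2 * wiener V E n"
proof -
  define W where "W = words V n"
  define sep :: "_ \<Rightarrow> nat \<Rightarrow> _ \<Rightarrow> _ \<Rightarrow> nat"
    where "sep c r x y = of_bool (separates (2 ^ cyc_exp n c) (proj n c x) (proj n c y) r)" for c r x y
  have "szeged V E n = real (\<Sum>c\<in>cycles n. \<Sum>r<2 ^ cyc_exp n c. \<Sum>x\<in>W. \<Sum>y\<in>W. sep c r x y)"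
    unfolding szeged_eq_cycle_sum of_nat_sum
    using n_closer_product by (intro sum.cong refl) (simp add: sep_def W_def)
  also have "(\<Sum>c\<in>cycles n. \<Sum>r<2 ^ cyc_exp n c. \<Sum>x\<in>W. \<Sum>y\<in>W. sep c r x y)
      = (\<Sum>x\<in>W. \<Sum>y\<in>W. \<Sum>c\<in>cycles n. \<Sum>r<2 ^ cyc_exp n c. sep c r x y)"
    by (simp only: sum.swap[of _ "cycles n"] sum.swap[of _ "{..<_}"])
  also have "\<dots> = (\<Sum>x\<in>W. \<Sum>y\<in>W. sch_dist V E n x y)"
    using sum_card_separates dist_eq_proj_dist
    by (intro sum.cong refl) (simp add: sep_def W_def proj_dist_def)
  finally show ?thesis by (simp add: wiener_def W_def)
qed

end

theorem corollary5p3: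
  fixes V :: "'v set" and E :: "('v \<times> 'v) set" and n :: nat
  assumes "oriented_tree V E" and "n \<ge> 1"
  shows "szeged V E n = 2 * wiener V E n"
proof -
  interpret tree_action V E by (rule tree_action.intro) (rule assms(1))
  show ?thesis by (rule szeged_eq_twice_wiener)
qed

end
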